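(* Let $M>0$ and let $W_{-1}$ denote the branch $-1$ of the Lambert $W$ function. For any two nondegenerate $n$-dimensional Gaussian distributions $\mathcal{N}(\bm\mu_1,\bm\Sigma_1)$ and $\mathcal{N}(\bm\mu_2,\bm\Sigma_2)$ (any $n\ge1$), if $KL(\mathcal{N}(\bm\mu_1,\bm\Sigma_1)\,\|\,\mathcal{N}(\bm\mu_2,\bm\Sigma_2))\ge M$, then $$KL(\mathcal{N}(\bm\mu_2,\bm\Sigma_2)\,\|\,\mathcal{N}(\bm\mu_1,\bm\Sigma_1))\ge \frac12\left\{\frac{1}{-W_{-1}(-e^{-(1+2M)})}-\log\frac{1}{-W_{-1}(-e^{-(1+2M)})}-1\right\}.$$
   Context: $KL(p\|q)=\int p\log(p/q)$ is the Kullback–Leibler divergence. The Lambert $W$ function is the (multivalued) inverse of $y=xe^x$; on real arguments in $[-1/e,0)$ it has two real branches: the principal branch $W_0$ (values in $[-1,0)$) and the branch $W_{-1}$ (values in $(-\infty,-1]$). *)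

theory Defs
  imports "HOL-Analysis.Analysis"
begin

definition lambert_W_m1 :: "real \<Rightarrow> real" where
  "lambert_W_m1 y = (THE w. w \<le> -1 \<and> w * exp w = y)"

definition pos_def_matrix :: "real^'n^'n \<Rightarrow> bool" where
  "pos_def_matrix S \<longleftrightarrow> transpose S = S \<and> (\<forall>x. x \<noteq> 0 \<longrightarrow> x \<bullet> (S *v x) > 0)"

definition gauss_density :: "real^'n \<Rightarrow> real^'n^'n \<Rightarrow> real^'n \<Rightarrow> real" where
  "gauss_density mu S x =
     exp (- (1/2) * ((x - mu) \<bullet> (matrix_inv S *v (x - mu))))
     / sqrt ((2 * pi) ^ CARD('n) * det S)"

definition KL :: "('a::euclidean_space \<Rightarrow> real) \<Rightarrow> ('a \<Rightarrow> real) \<Rightarrow> real" where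
  "KL p q = (\<integral>x. p x * ln (p x / q x) \<partial>lborel)"

end

theory Submission
  imports Defs "HOL-Probability.Distributions"
begin

(*
  Choose V with V^T S2^-1 V = I and V^T S1^-1 V = diag (1 / l_i) (simultaneous diagonalisation,
  obtained by maximising a Rayleigh quotient) and write mu2 - mu1 = V e.  The substitution
  x = mu1 + V w turns both Gaussians into products of one-dimensional normal densities, and with
  psi x = x - ln x - 1 one gets

    2 KL(p1 || p2) = sum_i psi l_i + e_i^2,      2 KL(p2 || p1) = sum_i psi (1 / l_i) + e_i^2 / l_i.

  Let L y >= 1 solve psi L = y and put phi y = psi (1 / L y).  As a function of psi L, psi (1 / L)
  is concave with slope 1 / L, which gives phi (psi l + a) <= psi (1 / l) + a / l for l > 0, a >= 0.
  Since phi is moreover nondecreasing and subadditive, 2 KL(p2 || p1) >= phi (2 M).  Finally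
  L y = - W_{-1} (- exp (- (1 + y))), so phi (2 M) is twice the stated bound.
*)

section \<open>The function psi and a scalar inequality\<close>

text \<open>\<open>psi x\<close> is twice the divergence between centred one-dimensional normal laws
  whose variances have ratio \<open>x\<close>.\<close>
definition psi :: "real \<Rightarrow> real" where
  "psi x = x - ln x - 1"

lemma psi_nonneg: "0 < x \<Longrightarrow> 0 \<le> psi x"
  using ln_le_minus_one[of x] by (simp add: psi_def)

lemma psi_recip: "0 < x \<Longrightarrow> psi (1 / x) = 1 / x + ln x - 1"
  by (simp add: psi_def ln_div)

lemma psi_strict_mono:
  assumes "1 \<le> a" "a < b"
  shows "psi a < psi b"
proof (rule DERIV_pos_imp_increasing_open[OF assms(2)])
  fix x assume "a < x" "x < b"
  with assms show "\<exists>y. (psi has_real_derivative y) (at x) \<and> 0 < y"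
    unfolding psi_def
    by (intro exI[of _ "1 - 1 / x"]) (auto intro!: derivative_eq_intros simp: field_simps)
qed (use assms in \<open>auto simp: psi_def intro!: continuous_intros\<close>)

lemma psi_le_iff: "1 \<le> a \<Longrightarrow> 1 \<le> b \<Longrightarrow> psi a \<le> psi b \<longleftrightarrow> a \<le> b"
  using psi_strict_mono[of a b] psi_strict_mono[of b a] by (cases a b rule: linorder_cases) auto

lemma psi_surj_ge_1:
  assumes "0 \<le> y"
  shows "\<exists>L\<ge>1. psi L = y"
proof -
  define s where "s = y + 2"
  have "y \<le> (s - 1)\<^sup>2"
    using assms by (simp add: s_def power2_eq_square algebra_simps)
  also have "\<dots> \<le> s\<^sup>2 - 2 * ln s - 1"
    using ln_le_minus_one[of s] assms by (simp add: s_def power2_eq_square algebra_simps)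
  also have "\<dots> = psi (s\<^sup>2)"
    using assms by (simp add: psi_def s_def ln_realpow)
  finally have "y \<le> psi (s\<^sup>2)" .
  moreover have "psi 1 \<le> y" "1 \<le> s\<^sup>2"
    using assms by (simp_all add: psi_def s_def one_le_power)
  moreover have "continuous_on {1..s\<^sup>2} psi"
    unfolding psi_def by (intro continuous_intros) auto
  ultimately show ?thesis
    using IVT'[of psi 1 y "s\<^sup>2"] by auto
qed

definition psi_upper_inv :: "real \<Rightarrow> real" where
  "psi_upper_inv y = (THE L. 1 \<le> L \<and> psi L = y)"

lemma psi_upper_inv_eqI:
  assumes "1 \<le> L" "psi L = y"
  shows "psi_upper_inv y = L"
  unfolding psi_upper_inv_def
proof (rule the_equality)
  fix L' assume "1 \<le> L' \<and> psi L' = y"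
  then have "L' \<le> L" "L \<le> L'"
    using assms psi_le_iff[of L L'] psi_le_iff[of L' L] by simp_all
  then show "L' = L" by simp
qed (use assms in simp)

lemma psi_upper_inv:
  assumes "0 \<le> y"
  shows "1 \<le> psi_upper_inv y" "psi (psi_upper_inv y) = y"
proof -
  obtain L where "1 \<le> L" "psi L = y"
    using psi_surj_ge_1[OF assms] by blast
  then show "1 \<le> psi_upper_inv y" "psi (psi_upper_inv y) = y"
    using psi_upper_inv_eqI by simp_all
qed

lemma psi_recip_le:
  assumes "1 \<le> x"
  shows "psi (1 / x) \<le> psi x"
proof -
  let ?h = "\<lambda>x. x - 1 / x - 2 * ln x"
  have "?h 1 \<le> ?h x"
  proof (rule DERIV_nonneg_imp_increasing_open[where f = ?h, OF assms])
    fix t :: real assume "1 < t" "t < x"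
    then have "(?h has_real_derivative (1 - 1 / t)\<^sup>2) (at t)"
      by (auto intro!: derivative_eq_intros simp: field_simps power2_eq_square)
    then show "\<exists>y. (?h has_real_derivative y) (at t) \<and> 0 \<le> y"
      by (blast intro: zero_le_power2)
  qed (intro continuous_intros, auto)
  then show ?thesis
    using assms by (simp add: psi_recip psi_def[of x])
qed

lemma psi_recip_mono:
  assumes "1 \<le> x" "x \<le> y"
  shows "psi (1 / x) \<le> psi (1 / y)"
proof -
  have "1 - x / y \<le> ln y - ln x"
    using ln_le_minus_one[of "x / y"] assms by (simp add: ln_div)
  moreover have "1 / x - 1 / y \<le> 1 - x / y"
  proof -
    have "1 / x - 1 / y = (y - x) / (x * y)"
      using assms by (simp add: field_simps)
    also have "\<dots> \<le> (y - x) / y"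
      using assms by (intro divide_left_mono) (auto simp: mult_le_cancel_right1)
    finally show ?thesis
      using assms by (simp add: field_simps)
  qed
  ultimately show ?thesis
    using assms by (simp add: psi_recip)
qed

text \<open>As a function of \<open>psi L\<close>, \<open>psi (1 / L)\<close> is concave with slope \<open>1 / L\<close>;
  this is its tangent inequality at \<open>l\<close>.\<close>
lemma psi_recip_tangent:
  assumes "1 \<le> l" "l \<le> L"
  shows "psi (1 / L) \<le> psi (1 / l) + (psi L - psi l) / l"
proof -
  let ?h = "\<lambda>L. (L - ln L) / l - 1 / L - ln L"
  have "?h l \<le> ?h L"
  proof (rule DERIV_nonneg_imp_increasing_open[where f = ?h, OF assms(2)])
    fix t :: real assume t: "l < t" "t < L"
    have "(?h has_real_derivative (t - 1) / t * (1 / l - 1 / t)) (at t)"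
      using t assms by (auto intro!: derivative_eq_intros simp: field_simps power2_eq_square)
    moreover have "0 \<le> (t - 1) / t * (1 / l - 1 / t)"
      using t assms by (intro mult_nonneg_nonneg) (auto simp: field_simps)
    ultimately show "\<exists>y. (?h has_real_derivative y) (at t) \<and> 0 \<le> y" by blast
  qed (use assms in \<open>intro continuous_intros, auto\<close>)
  moreover have "psi (1 / l) + (psi L - psi l) / l - psi (1 / L) = ?h L - ?h l"
    using assms by (simp add: psi_recip psi_def[of L] psi_def[of l] field_simps)
  ultimately show ?thesis
    by linarith
qed

lemma psi_le_mult_psi_recip:
  assumes "1 \<le> L"
  shows "psi L \<le> L * psi (1 / L)"
proof -
  let ?h = "\<lambda>x. (x + 1) * ln x - 2 * (x - 1)"
  have "?h 1 \<le> ?h L"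
  proof (rule DERIV_nonneg_imp_increasing_open[where f = ?h, OF assms])
    fix t :: real assume t: "1 < t" "t < L"
    have "(?h has_real_derivative ln t + 1 / t - 1) (at t)"
      using t by (auto intro!: derivative_eq_intros simp: field_simps)
    moreover have "0 \<le> ln t + 1 / t - 1"
      using ln_le_minus_one[of "1 / t"] t by (simp add: ln_div)
    ultimately show "\<exists>y. (?h has_real_derivative y) (at t) \<and> 0 \<le> y" by blast
  qed (intro continuous_intros, auto)
  moreover have "L * psi (1 / L) - psi L = ?h L"
    using assms by (simp add: psi_recip psi_def[of L] algebra_simps)
  ultimately show ?thesis
    by simp
qed

text \<open>\<open>psi_recip_bound y\<close> is the least value of \<open>psi (1 / l) + a / l\<close> over \<open>l > 0\<close>,
  \<open>a \<ge> 0\<close> with \<open>psi l + a = y\<close>; it is attained at \<open>l = psi_upper_inv y\<close>, \<open>a = 0\<close>.\<close>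
definition psi_recip_bound :: "real \<Rightarrow> real" where
  "psi_recip_bound y = psi (1 / psi_upper_inv y)"

lemma psi_recip_bound_nonneg: "0 \<le> y \<Longrightarrow> 0 \<le> psi_recip_bound y"
  unfolding psi_recip_bound_def using psi_upper_inv[of y] by (intro psi_nonneg) auto

lemma psi_recip_bound_zero: "psi_recip_bound 0 = 0"
  using psi_upper_inv_eqI[of 1 0] by (simp add: psi_recip_bound_def psi_def)

lemma psi_recip_bound_le: "0 \<le> y \<Longrightarrow> psi_recip_bound y \<le> y"
  unfolding psi_recip_bound_def using psi_upper_inv[of y] psi_recip_le[of "psi_upper_inv y"] by simp

lemma psi_recip_bound_mono:
  assumes "0 \<le> y" "y \<le> z"
  shows "psi_recip_bound y \<le> psi_recip_bound z"
proof -
  have "psi_upper_inv y \<le> psi_upper_inv z"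
    using psi_upper_inv[of y] psi_upper_inv[of z] assms psi_le_iff by fastforce
  then show ?thesis
    unfolding psi_recip_bound_def using psi_upper_inv[of y] assms by (intro psi_recip_mono) auto
qed

lemma psi_recip_bound_le_psi_recip_add:
  assumes "0 < l" "0 \<le> a"
  shows "psi_recip_bound (psi l + a) \<le> psi (1 / l) + a / l"
proof (cases "1 \<le> l")
  case True
  define L where "L = psi_upper_inv (psi l + a)"
  have L: "1 \<le> L" "psi L = psi l + a"
    unfolding L_def using psi_upper_inv psi_nonneg[of l] assms by auto
  then have "l \<le> L"
    using psi_le_iff[OF True L(1)] assms by simp
  with True L show ?thesis
    using psi_recip_tangent[of l L] by (simp add: psi_recip_bound_def L_def[symmetric])
next
  case False
  have "psi_recip_bound (psi l + a) \<le> psi l + a"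
    using psi_nonneg[of l] assms by (intro psi_recip_bound_le) simp
  moreover have "psi l \<le> psi (1 / l)"
    using psi_recip_le[of "1 / l"] False assms by simp
  moreover have "a \<le> a / l"
    using False assms by (simp add: le_divide_eq mult_left_le)
  ultimately show ?thesis
    by linarith
qed

lemma psi_recip_bound_scaled_mono:
  assumes "0 \<le> y" "y \<le> z"
  shows "y * psi_recip_bound z \<le> z * psi_recip_bound y"
proof (cases "y = 0")
  case True
  then show ?thesis
    using psi_recip_bound_nonneg[of 0] assms by simp
next
  case False
  define L where "L = psi_upper_inv y"
  have L: "1 \<le> L" "psi L = y"
    unfolding L_def using psi_upper_inv assms by auto
  have "psi_recip_bound z \<le> psi_recip_bound y + (z - y) / L"
    using psi_recip_bound_le_psi_recip_add[of L "z - y"] L assms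
    by (simp add: psi_recip_bound_def L_def)
  then have "y * psi_recip_bound z \<le> y * psi_recip_bound y + (z - y) * (y / L)"
    using mult_left_mono assms by (fastforce simp: algebra_simps)
  also have "\<dots> \<le> y * psi_recip_bound y + (z - y) * psi_recip_bound y"
    using psi_le_mult_psi_recip[OF L(1)] L assms
    by (intro add_left_mono mult_left_mono) (auto simp: psi_recip_bound_def L_def field_simps)
  finally show ?thesis
    by (simp add: algebra_simps)
qed

lemma psi_recip_bound_add:
  assumes "0 \<le> y" "0 \<le> z"
  shows "psi_recip_bound (y + z) \<le> psi_recip_bound y + psi_recip_bound z"
proof (cases "y + z = 0")
  case True
  then have "y = 0" "z = 0"
    using assms by linarith+
  then show ?thesis
    by (simp add: psi_recip_bound_zero)
next
  case False
  have "(y + z) * psi_recip_bound (y + z) \<le> (y + z) * (psi_recip_bound y + psi_recip_bound z)"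
    using psi_recip_bound_scaled_mono[of y "y + z"] psi_recip_bound_scaled_mono[of z "y + z"] assms
    by (simp add: algebra_simps)
  then show ?thesis
    using False assms by (simp add: mult_le_cancel_left)
qed

lemma psi_recip_bound_sum:
  assumes "finite I" "\<And>i. i \<in> I \<Longrightarrow> 0 \<le> y i"
  shows "psi_recip_bound (\<Sum>i\<in>I. y i) \<le> (\<Sum>i\<in>I. psi_recip_bound (y i))"
  using assms
proof (induction I rule: finite_induct)
  case empty
  then show ?case
    by (simp add: psi_recip_bound_zero)
next
  case (insert i I)
  then have "psi_recip_bound (y i + sum y I) \<le> psi_recip_bound (y i) + psi_recip_bound (sum y I)"
    by (intro psi_recip_bound_add) (auto intro: sum_nonneg)
  with insert show ?case
    by simp
qed

lemma psi_recip_bound_le_sum: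
  assumes "finite I" "\<And>i. i \<in> I \<Longrightarrow> 0 < l i"
    and "0 \<le> y" "y \<le> (\<Sum>i\<in>I. psi (l i) + (e i)\<^sup>2)"
  shows "psi_recip_bound y \<le> (\<Sum>i\<in>I. psi (1 / l i) + (e i)\<^sup>2 / l i)"
proof -
  have nonneg: "0 \<le> psi (l i) + (e i)\<^sup>2" if "i \<in> I" for i
    using psi_nonneg[of "l i"] assms(2)[OF that] by simp
  have "psi_recip_bound y \<le> psi_recip_bound (\<Sum>i\<in>I. psi (l i) + (e i)\<^sup>2)"
    using assms by (intro psi_recip_bound_mono)
  also have "\<dots> \<le> (\<Sum>i\<in>I. psi_recip_bound (psi (l i) + (e i)\<^sup>2))"
    using assms(1) nonneg by (rule psi_recip_bound_sum)
  also have "\<dots> \<le> (\<Sum>i\<in>I. psi (1 / l i) + (e i)\<^sup>2 / l i)"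
    using assms(2) by (intro sum_mono psi_recip_bound_le_psi_recip_add) auto
  finally show ?thesis .
qed

lemma lambert_W_m1_eq_psi_upper_inv:
  assumes "0 \<le> y"
  shows "lambert_W_m1 (- exp (- (1 + y))) = - psi_upper_inv y"
proof -
  define L where "L = psi_upper_inv y"
  have L: "1 \<le> L" "psi L = y"
    unfolding L_def using psi_upper_inv[OF assms] by auto
  have "w \<le> -1 \<and> w * exp w = - exp (- (1 + y)) \<longleftrightarrow> w = -L" for w
  proof
    assume w: "w \<le> -1 \<and> w * exp w = - exp (- (1 + y))"
    then have "ln (- w) + w = - (1 + y)"
      using ln_mult[of "- w" "exp w"] by simp
    then have "psi (- w) = y"
      by (simp add: psi_def)
    then show "w = -L"
      using psi_upper_inv_eqI[of "- w" y] w L_def by simp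
  next
    assume "w = -L"
    moreover have "L * exp (- L) = exp (ln L - L)"
      using L by (simp add: exp_diff exp_minus field_simps)
    moreover have "ln L - L = - (1 + y)"
      using L by (simp add: psi_def)
    ultimately show "w \<le> -1 \<and> w * exp w = - exp (- (1 + y))"
      using L by simp
  qed
  then show ?thesis
    unfolding lambert_W_m1_def L_def[symmetric] by simp
qed

section \<open>Simultaneous diagonalization of two positive definite forms\<close>

lemma inner_matrix_vector_sym:
  fixes A :: "real^'n^'n"
  assumes "transpose A = A"
  shows "x \<bullet> (A *v y) = y \<bullet> (A *v x)"
  by (metis assms dot_lmul_matrix inner_commute transpose_matrix_vector)

lemma matrix_mul_matrix_inv:
  fixes A :: "real^'n^'n"
  assumes "invertible A"
  shows "A ** matrix_inv A = mat 1" "matrix_inv A ** A = mat 1"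
proof -
  have "\<exists>A'. A ** A' = mat 1 \<and> A' ** A = mat 1"
    using assms unfolding invertible_def .
  from someI_ex[OF this] show "A ** matrix_inv A = mat 1" "matrix_inv A ** A = mat 1"
    unfolding matrix_inv_def by auto
qed

lemma matrix_vector_mul_matrix_inv:
  fixes A :: "real^'n^'n"
  assumes "invertible A"
  shows "A *v (matrix_inv A *v x) = x" "matrix_inv A *v (A *v x) = x"
  using matrix_mul_matrix_inv[OF assms] by (simp_all add: matrix_vector_mul_assoc)

lemma pos_def_matrix_invertible:
  assumes "pos_def_matrix S"
  shows "invertible S"
proof -
  have "x = 0" if "S *v x = 0" for x
    using assms that by (auto simp: pos_def_matrix_def)
  then show ?thesis
    by (simp add: invertible_left_inverse matrix_left_invertible_ker)
qed

lemma pos_def_matrix_inv: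
  assumes "pos_def_matrix S"
  shows "pos_def_matrix (matrix_inv S)"
proof -
  define A where "A = matrix_inv S"
  have SA: "S ** A = mat 1" "A ** S = mat 1"
    using matrix_mul_matrix_inv[OF pos_def_matrix_invertible[OF assms]] unfolding A_def by auto
  have "transpose A ** S = mat 1"
    using arg_cong[OF SA(1), of transpose] assms
    by (simp add: pos_def_matrix_def matrix_transpose_mul transpose_mat)
  then have "transpose A = A"
    by (metis SA(1) matrix_mul_assoc matrix_mul_lid matrix_mul_rid)
  moreover have "x \<bullet> (A *v x) > 0" if "x \<noteq> 0" for x
  proof -
    have x: "x = S *v (A *v x)"
      using SA by (simp add: matrix_vector_mul_assoc)
    then have "A *v x \<noteq> 0"
      using that by auto
    then have "0 < (A *v x) \<bullet> (S *v (A *v x))"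
      using assms by (simp add: pos_def_matrix_def)
    then show ?thesis
      by (simp flip: x add: inner_commute)
  qed
  ultimately show ?thesis
    unfolding pos_def_matrix_def A_def by auto
qed

lemma linear_coeff_zero_if_quadratic_nonneg:
  fixes b q :: real
  assumes "\<And>t. 0 \<le> 2 * t * b + t\<^sup>2 * q" "0 \<le> q"
  shows "b = 0"
proof -
  define t where "t = - b / (q + 1)"
  have tq: "t * (q + 1) = - b"
    unfolding t_def using assms(2) by simp
  have "(q + 1)\<^sup>2 * (2 * t * b + t\<^sup>2 * q) = 2 * b * (t * (q + 1)) * (q + 1) + (t * (q + 1))\<^sup>2 * q"
    by (simp add: algebra_simps power2_eq_square)
  also have "\<dots> = - (b\<^sup>2 * (q + 2))"
    unfolding tq by (simp add: algebra_simps power2_eq_square)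
  finally have "(q + 1)\<^sup>2 * (2 * t * b + t\<^sup>2 * q) = - (b\<^sup>2 * (q + 2))" .
  moreover have "0 \<le> (q + 1)\<^sup>2 * (2 * t * b + t\<^sup>2 * q)"
    using assms by simp
  ultimately have "b\<^sup>2 * (q + 2) \<le> 0"
    by linarith
  then show ?thesis
    using assms(2) by (simp add: mult_le_0_iff)
qed

lemma quadratic_form_zero_stationary:
  fixes A :: "real^'n^'n"
  assumes "transpose A = A" "subspace W"
    and nonneg: "\<And>x. x \<in> W \<Longrightarrow> 0 \<le> x \<bullet> (A *v x)"
    and "v \<in> W" "v \<bullet> (A *v v) = 0" "x \<in> W"
  shows "x \<bullet> (A *v v) = 0"
proof (rule linear_coeff_zero_if_quadratic_nonneg)
  fix t :: real
  have "v + t *\<^sub>R x \<in> W"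
    using assms by (simp add: subspace_add subspace_scale)
  then have "0 \<le> (v + t *\<^sub>R x) \<bullet> (A *v (v + t *\<^sub>R x))"
    by (rule nonneg)
  also have "\<dots> = 2 * t * (x \<bullet> (A *v v)) + t\<^sup>2 * (x \<bullet> (A *v x))"
    using assms inner_matrix_vector_sym[OF assms(1), of v x]
    by (simp add: matrix_vector_right_distrib matrix_vector_mult_scaleR inner_add_left
        inner_add_right power2_eq_square algebra_simps)
  finally show "0 \<le> 2 * t * (x \<bullet> (A *v v)) + t\<^sup>2 * (x \<bullet> (A *v x))" .
qed (use assms in simp)

lemma rayleigh_quotient_max_on_subspace:
  fixes G B :: "real^'n^'n"
  assumes G: "pos_def_matrix G" and W: "subspace W" "W \<noteq> {0}"
  obtains v \<nu> where "v \<in> W" "v \<noteq> 0" "v \<bullet> (B *v v) = \<nu> * (v \<bullet> (G *v v))"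
    "\<And>x. x \<in> W \<Longrightarrow> x \<bullet> (B *v x) \<le> \<nu> * (x \<bullet> (G *v x))"
proof -
  have Gpos: "0 < x \<bullet> (G *v x)" if "x \<noteq> 0" for x
    using G that by (simp add: pos_def_matrix_def)
  define R where "R x = (x \<bullet> (B *v x)) / (x \<bullet> (G *v x))" for x
  define K where "K = W \<inter> sphere 0 1"
  have "compact K"
    unfolding K_def using closed_subspace[OF W(1)] by (intro closed_Int_compact) auto
  moreover obtain w where "w \<in> W" "w \<noteq> 0"
    using W subspace_0 by blast
  then have "w /\<^sub>R norm w \<in> K"
    unfolding K_def using W(1) by (simp add: subspace_scale)
  then have "K \<noteq> {}"
    by auto
  moreover have "continuous_on K R"
  proof -
    have "x \<bullet> (G *v x) \<noteq> 0" if "x \<in> K" for x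
      using Gpos[of x] that by (cases "x = 0") (auto simp: K_def)
    then show ?thesis
      unfolding R_def by (intro continuous_intros) auto
  qed
  ultimately obtain v where v: "v \<in> K" "\<And>y. y \<in> K \<Longrightarrow> R y \<le> R v"
    using continuous_attains_sup by metis
  have "x \<bullet> (B *v x) \<le> R v * (x \<bullet> (G *v x))" if "x \<in> W" for x
  proof (cases "x = 0")
    case False
    then have "x /\<^sub>R norm x \<in> K"
      unfolding K_def using W(1) that by (simp add: subspace_scale)
    then have "R (x /\<^sub>R norm x) \<le> R v"
      by (rule v(2))
    moreover have "R (x /\<^sub>R norm x) = R x"
      unfolding R_def using False by (simp add: matrix_vector_mult_scaleR field_simps)
    ultimately show ?thesis
      using Gpos[OF False] by (simp add: R_def divide_le_eq mult.commute)
  qed simp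
  moreover have "v \<noteq> 0"
    using v(1) by (auto simp: K_def)
  ultimately show ?thesis
    using that[of v "R v"] v(1) Gpos[of v] by (simp add: K_def R_def)
qed

lemma rayleigh_maximizer_generalized_eigenvector:
  fixes G B :: "real^'n^'n"
  assumes G: "pos_def_matrix G" and B: "transpose B = B" and W: "subspace W"
    and inv: "\<And>x. x \<in> W \<Longrightarrow> matrix_inv G *v (B *v x) \<in> W"
    and v: "v \<in> W" "v \<bullet> (B *v v) = \<nu> * (v \<bullet> (G *v v))"
    and max: "\<And>x. x \<in> W \<Longrightarrow> x \<bullet> (B *v x) \<le> \<nu> * (x \<bullet> (G *v x))"
  shows "B *v v = \<nu> *\<^sub>R (G *v v)"
proof -
  have Gsym: "transpose G = G" and Gpos: "\<And>x. x \<noteq> 0 \<Longrightarrow> 0 < x \<bullet> (G *v x)"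
    using G by (auto simp: pos_def_matrix_def)
  note Ginv = matrix_vector_mul_matrix_inv[OF pos_def_matrix_invertible[OF G]]
  define A where "A = \<nu> *\<^sub>R G - B"
  have A: "A *v x = \<nu> *\<^sub>R (G *v x) - B *v x" for x
    by (simp add: A_def matrix_vector_mult_diff_rdistrib scaleR_matrix_vector_assoc)
  have "transpose A = A"
    using Gsym B by (simp add: A_def transpose_def vec_eq_iff)
  moreover have "0 \<le> x \<bullet> (A *v x)" if "x \<in> W" for x
    using max[OF that] by (simp add: A inner_diff_right)
  moreover have "v \<bullet> (A *v v) = 0"
    using v(2) by (simp add: A inner_diff_right)
  ultimately have stat: "x \<bullet> (A *v v) = 0" if "x \<in> W" for x
    using quadratic_form_zero_stationary[OF _ W _ v(1) _ that] by blast
  define z where "z = matrix_inv G *v (A *v v)"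
  have Gz: "G *v z = A *v v"
    unfolding z_def by (rule Ginv(1))
  have "z = \<nu> *\<^sub>R v - matrix_inv G *v (B *v v)"
    by (simp add: z_def A matrix_vector_mult_diff_distrib matrix_vector_mult_scaleR Ginv(2))
  then have "z \<in> W"
    using W v(1) inv[OF v(1)] by (simp add: subspace_diff subspace_scale)
  then have "z \<bullet> (G *v z) = 0"
    using stat Gz by simp
  then have "A *v v = 0"
    using Gpos[of z] Gz by fastforce
  then show ?thesis
    by (simp add: A)
qed

lemma G_orthogonal_exists:
  fixes G :: "real^'n^'n" and F :: "'n set" and v :: "'n \<Rightarrow> real^'n"
  assumes "transpose G = G" "a \<notin> F"
  obtains w where "w \<noteq> 0" "\<forall>i\<in>F. v i \<bullet> (G *v w) = 0"
proof -
  have "dim ((\<lambda>i. G *v v i) ` F) \<le> card F"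
    using dim_le_card'[of "(\<lambda>i. G *v v i) ` F"] card_image_le[of F "\<lambda>i. G *v v i"]
    by simp
  also have "card F < CARD('n)"
    using assms(2) by (intro psubset_card_mono) auto
  finally obtain w where w: "w \<noteq> 0" "\<And>y. y \<in> span ((\<lambda>i. G *v v i) ` F) \<Longrightarrow> orthogonal w y"
    using orthogonal_to_subspace_exists[of "(\<lambda>i. G *v v i) ` F"] by auto
  moreover have "v i \<bullet> (G *v w) = 0" if "i \<in> F" for i
    using w(2)[of "G *v v i"] that inner_matrix_vector_sym[OF assms(1), of "v i" w]
    by (simp add: orthogonal_def span_base)
  ultimately show ?thesis
    using that by blast
qed

lemma generalized_eigenvector_G_orthogonal:
  fixes G B :: "real^'n^'n" and F :: "'n set" and v :: "'n \<Rightarrow> real^'n"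
  assumes G: "pos_def_matrix G" and B: "transpose B = B" and "a \<notin> F"
    and eig: "\<And>i. i \<in> F \<Longrightarrow> B *v v i = \<mu> i *\<^sub>R (G *v v i)"
  obtains u \<nu> where "\<forall>i\<in>F. v i \<bullet> (G *v u) = 0" "u \<bullet> (G *v u) = 1" "B *v u = \<nu> *\<^sub>R (G *v u)"
proof -
  have Gsym: "transpose G = G" and Gpos: "\<And>x. x \<noteq> 0 \<Longrightarrow> 0 < x \<bullet> (G *v x)"
    using G by (auto simp: pos_def_matrix_def)
  define W where "W = {x. \<forall>i\<in>F. v i \<bullet> (G *v x) = 0}"
  have W: "subspace W"
    unfolding W_def subspace_def
    by (simp add: matrix_vector_right_distrib matrix_vector_mult_scaleR inner_add_right)
  obtain w where "w \<noteq> 0" "\<forall>i\<in>F. v i \<bullet> (G *v w) = 0"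
    using G_orthogonal_exists[OF Gsym \<open>a \<notin> F\<close>] by blast
  then have "W \<noteq> {0}"
    by (auto simp: W_def)
  then obtain v0 \<nu> where v0: "v0 \<in> W" "v0 \<noteq> 0" "v0 \<bullet> (B *v v0) = \<nu> * (v0 \<bullet> (G *v v0))"
    and max: "\<And>x. x \<in> W \<Longrightarrow> x \<bullet> (B *v x) \<le> \<nu> * (x \<bullet> (G *v x))"
    using rayleigh_quotient_max_on_subspace[OF G W] by metis
  have "matrix_inv G *v (B *v x) \<in> W" if "x \<in> W" for x
    using that eig inner_matrix_vector_sym[OF B, of _ x] inner_matrix_vector_sym[OF Gsym, of x]
    by (simp add: W_def matrix_vector_mul_matrix_inv(1)[OF pos_def_matrix_invertible[OF G]])
  then have eig0: "B *v v0 = \<nu> *\<^sub>R (G *v v0)"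
    using rayleigh_maximizer_generalized_eigenvector[OF G B W _ v0(1,3) max] by blast
  define u where "u = v0 /\<^sub>R sqrt (v0 \<bullet> (G *v v0))"
  have "u \<bullet> (G *v u) = 1"
  proof -
    have "0 < v0 \<bullet> (G *v v0)"
      using Gpos[OF v0(2)] .
    moreover have "sqrt (v0 \<bullet> (G *v v0)) * sqrt (v0 \<bullet> (G *v v0)) = v0 \<bullet> (G *v v0)"
      using calculation by simp
    ultimately show ?thesis
      by (simp add: u_def matrix_vector_mult_scaleR field_simps)
  qed
  moreover have "\<forall>i\<in>F. v i \<bullet> (G *v u) = 0"
    using v0(1) by (simp add: W_def u_def matrix_vector_mult_scaleR)
  moreover have "B *v u = \<nu> *\<^sub>R (G *v u)"
    by (simp add: u_def matrix_vector_mult_scaleR eig0)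
  ultimately show ?thesis
    using that by blast
qed

lemma G_orthonormal_eigenbasis:
  fixes G B :: "real^'n^'n"
  assumes G: "pos_def_matrix G" and B: "transpose B = B"
  obtains v :: "'n \<Rightarrow> real^'n" and \<mu>
  where "\<And>i j. v i \<bullet> (G *v v j) = (if i = j then 1 else 0)"
    and "\<And>i. B *v v i = \<mu> i *\<^sub>R (G *v v i)"
proof -
  have Gsym: "transpose G = G"
    using G by (simp add: pos_def_matrix_def)
  have "\<exists>v \<mu>. (\<forall>i\<in>F. \<forall>j\<in>F. v i \<bullet> (G *v v j) = (if i = j then 1 else 0)) \<and>
      (\<forall>i\<in>F. B *v v i = \<mu> i *\<^sub>R (G *v v i))" if "finite F" for F :: "'n set"
    using that
  proof (induction F rule: finite_induct)
    case (insert a F)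
    then obtain v \<mu> where orth: "\<forall>i\<in>F. \<forall>j\<in>F. v i \<bullet> (G *v v j) = (if i = j then 1 else 0)"
      and eig: "\<forall>i\<in>F. B *v v i = \<mu> i *\<^sub>R (G *v v i)"
      by blast
    obtain u \<nu> where u: "\<forall>i\<in>F. v i \<bullet> (G *v u) = 0" "u \<bullet> (G *v u) = 1" "B *v u = \<nu> *\<^sub>R (G *v u)"
      using generalized_eigenvector_G_orthogonal[OF G B insert(2), of v \<mu>] eig by metis
    have "u \<bullet> (G *v v j) = 0" if "j \<in> F" for j
      using u(1) that inner_matrix_vector_sym[OF Gsym, of u "v j"] by simp
    then have "\<forall>i\<in>insert a F. \<forall>j\<in>insert a F.
        (v(a := u)) i \<bullet> (G *v (v(a := u)) j) = (if i = j then 1 else 0)"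
      using orth u insert(2) by auto
    moreover have "\<forall>i\<in>insert a F. B *v (v(a := u)) i = (\<mu>(a := \<nu>)) i *\<^sub>R (G *v (v(a := u)) i)"
      using eig u(3) insert(2) by auto
    ultimately show ?case
      by blast
  qed simp
  from this[of UNIV] show ?thesis
    using that by auto
qed

definition diag_mat :: "('n \<Rightarrow> real) \<Rightarrow> real^'n^'n" where
  "diag_mat d = (\<chi> i j. if i = j then d i else 0)"

lemma diag_mat_mult_vector: "diag_mat d *v x = (\<chi> i. d i * x $ i)"
proof -
  have "(\<Sum>j\<in>UNIV. (if i = j then d i else 0) * x $ j) = d i * x $ i" for i
    by (simp add: if_distrib[of "\<lambda>y. y * _"] cong: if_cong)
  then show ?thesis
    by (simp add: vec_eq_iff matrix_vector_mult_def diag_mat_def)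
qed

lemma inner_diag_mat: "x \<bullet> (diag_mat d *v x) = (\<Sum>i\<in>UNIV. d i * (x $ i)\<^sup>2)"
  by (simp add: diag_mat_mult_vector inner_vec_def power2_eq_square mult.left_commute)

lemma det_diag_mat: "det (diag_mat d) = (\<Prod>i\<in>UNIV. d i)"
  by (subst det_diagonal) (auto simp: diag_mat_def)

lemma mat_1_eq_diag_mat: "mat 1 = diag_mat (\<lambda>_. 1)"
  by (simp add: vec_eq_iff mat_def diag_mat_def)

lemma congruence_transform_entry:
  fixes V A :: "real^'n^'n"
  shows "(transpose V ** A ** V) $ i $ j = column i V \<bullet> (A *v column j V)"
proof -
  have "(transpose V ** A ** V) $ i $ j = (\<Sum>k\<in>UNIV. \<Sum>l\<in>UNIV. V$l$i * A$l$k * V$k$j)"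
    by (simp add: matrix_matrix_mult_def transpose_def sum_distrib_right)
  also have "\<dots> = (\<Sum>l\<in>UNIV. V$l$i * (\<Sum>k\<in>UNIV. A$l$k * V$k$j))"
    by (subst sum.swap) (simp add: sum_distrib_left mult.assoc)
  finally show ?thesis
    by (simp add: inner_vec_def matrix_vector_mult_def column_def)
qed

lemma simultaneous_diagonalization:
  fixes G B :: "real^'n^'n"
  assumes G: "pos_def_matrix G" and B: "pos_def_matrix B"
  obtains V :: "real^'n^'n" and \<mu> where "transpose V ** G ** V = mat 1" "transpose V ** B ** V = diag_mat \<mu>"
    "\<And>i. 0 < \<mu> i"
proof -
  obtain v :: "'n \<Rightarrow> real^'n" and \<mu>
    where orth: "\<And>i j. v i \<bullet> (G *v v j) = (if i = j then 1 else 0)"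
      and eig: "\<And>i. B *v v i = \<mu> i *\<^sub>R (G *v v i)"
    using G_orthonormal_eigenbasis[OF G] B by (auto simp: pos_def_matrix_def)
  define V :: "real^'n^'n" where "V = (\<chi> r c. v c $ r)"
  have col: "column j V = v j" for j
    unfolding V_def column_def by (simp add: vec_eq_iff)
  have "transpose V ** G ** V = mat 1"
    by (simp add: vec_eq_iff congruence_transform_entry col orth mat_def)
  moreover have "transpose V ** B ** V = diag_mat \<mu>"
    by (simp add: vec_eq_iff congruence_transform_entry col eig orth diag_mat_def
        matrix_vector_mult_scaleR)
  moreover have "\<And>i. 0 < \<mu> i"
  proof -
    fix i
    have "v i \<noteq> 0"
      using orth[of i i] by auto
    then have "0 < v i \<bullet> (B *v v i)"
      using B by (simp add: pos_def_matrix_def)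
    then show "0 < \<mu> i"
      using orth[of i i] by (simp add: eig matrix_vector_mult_scaleR)
  qed
  ultimately show ?thesis
    by (rule that)
qed

section \<open>Lebesgue measure under linear maps\<close>

text \<open>The library's \<open>measure_linear_image\<close> assumes a wellordered index type; the version
  proved here holds for every finite one.\<close>
definition det_scales_measure :: "(real^'n \<Rightarrow> real^'n) \<Rightarrow> bool" where
  "det_scales_measure f \<longleftrightarrow> (\<forall>S \<in> lmeasurable. f ` S \<in> lmeasurable \<and>
     measure lebesgue (f ` S) = \<bar>det (matrix f)\<bar> * measure lebesgue S)"

lemma det_scales_measure_comp:
  fixes f g :: "real^'n \<Rightarrow> real^'n"
  assumes "linear f" "linear g" "det_scales_measure f" "det_scales_measure g"
  shows "det_scales_measure (f \<circ> g)"
  unfolding det_scales_measure_def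
proof
  fix S :: "(real^'n) set" assume S: "S \<in> lmeasurable"
  have g: "g ` S \<in> lmeasurable" "measure lebesgue (g ` S) = \<bar>det (matrix g)\<bar> * measure lebesgue S"
    using assms(4) S by (auto simp: det_scales_measure_def)
  have f: "f ` g ` S \<in> lmeasurable"
    "measure lebesgue (f ` g ` S) = \<bar>det (matrix f)\<bar> * measure lebesgue (g ` S)"
    using assms(3) g(1) by (auto simp: det_scales_measure_def)
  show "(f \<circ> g) ` S \<in> lmeasurable \<and>
      measure lebesgue ((f \<circ> g) ` S) = \<bar>det (matrix (f \<circ> g))\<bar> * measure lebesgue S"
    using f g assms(1,2) by (simp add: image_comp matrix_compose det_mul abs_mult)
qed

lemma det_scales_measure_stretch: "det_scales_measure (\<lambda>x. \<chi> i. c i * x $ i)"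
proof -
  have "matrix (\<lambda>x. \<chi> i. c i * x $ i) = (\<chi> i j. if i = j then c i else 0)"
    by (simp add: matrix_def axis_def vec_eq_iff)
  then show ?thesis
    by (simp add: det_scales_measure_def measurable_stretch measure_stretch det_diagonal)
qed

lemma linear_shear: "linear (\<lambda>x. \<chi> i. if i = m then x $ m + x $ n else x $ i :: real^'n)"
  by (rule linearI) (simp_all add: vec_eq_iff algebra_simps)

lemma measure_shear_cbox:
  fixes a b :: "real^'n"
  assumes "m \<noteq> n"
  defines "h \<equiv> \<lambda>x. \<chi> i. if i = m then x $ m + x $ n else x $ i :: real^'n"
  shows "measure lebesgue (h ` cbox a b) = measure lebesgue (cbox a b)"
proof (cases "cbox a b = {}")
  case False
  \<comment> \<open>translate the box into the half-space \<open>x $ n \<ge> 0\<close>, where \<open>measure_shear_interval\<close> applies\<close>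
  define t :: "real^'n" where "t = axis n (- a $ n)"
  have "linear h"
    unfolding h_def by (rule linear_shear)
  then have "h (- t) + h (t + x) = h x" for x
    using linear_add[of h "- t" "t + x"] by simp
  then have "h ` cbox a b = (+) (h (- t)) ` h ` (+) t ` cbox a b"
    by (simp add: image_image)
  then have "measure lebesgue (h ` cbox a b) = measure lebesgue (h ` cbox (t + a) (t + b))"
    by (simp add: measure_translation cbox_translation)
  also have "\<dots> = measure lebesgue (cbox (t + a) (t + b))"
  proof -
    have "cbox (t + a) (t + b) \<noteq> {}"
      using False by (simp add: cbox_translation)
    moreover have "0 \<le> (t + a) $ n"
      by (simp add: t_def)
    ultimately show ?thesis
      unfolding h_def by (rule measure_shear_interval[OF assms(1)])
  qed
  also have "\<dots> = measure lebesgue (cbox a b)"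
    by (simp add: measure_translation cbox_translation)
  finally show ?thesis .
qed simp

lemma det_scales_measure_shear:
  assumes "m \<noteq> n"
  shows "det_scales_measure (\<lambda>x. \<chi> i. if i = m then x $ m + x $ n else x $ i :: real^'n)"
    (is "det_scales_measure ?h")
proof -
  have "matrix ?h = (\<chi> k. if k = m then row m (mat 1) + 1 *s row n (mat 1) else row k (mat 1))"
    using assms by (auto simp: matrix_def vec_eq_iff row_def mat_def axis_def)
  then have det: "det (matrix ?h) = 1"
    using det_row_operation[OF assms, of "mat 1" 1] by (simp add: det_I)
  have "?h ` S \<in> lmeasurable \<and> measure lebesgue (?h ` S) = measure lebesgue S"
    if "S \<in> lmeasurable" for S
    using measure_linear_sufficient[OF linear_shear[of m n] that, of 1] measure_shear_cbox[OF assms] by auto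
  then show ?thesis
    by (simp add: det_scales_measure_def det)
qed

text \<open>A transposition of coordinates is a product of shears and sign changes.\<close>
lemma det_scales_measure_swap:
  assumes "m \<noteq> n"
  shows "det_scales_measure (\<lambda>x. \<chi> i. x $ Transposition.transpose m n i :: real^'n)"
proof -
  define neg :: "'n \<Rightarrow> real^'n \<Rightarrow> real^'n" where
    "neg k = (\<lambda>x. \<chi> i. (if i = k then -1 else 1) * x $ i)" for k
  define shear :: "'n \<Rightarrow> 'n \<Rightarrow> real^'n \<Rightarrow> real^'n" where
    "shear k l = (\<lambda>x. \<chi> i. if i = k then x $ k + x $ l else x $ i)" for k l
  have "(\<lambda>x. \<chi> i. x $ Transposition.transpose m n i)
      = neg n \<circ> shear m n \<circ> (neg m \<circ> shear n m \<circ> neg m) \<circ> shear m n"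
    using assms by (auto simp: fun_eq_iff vec_eq_iff neg_def shear_def Transposition.transpose_def)
  moreover have "linear (neg k)" for k
    unfolding neg_def by (rule linearI) (simp_all add: vec_eq_iff algebra_simps)
  moreover have "det_scales_measure (neg k)" for k
    unfolding neg_def by (rule det_scales_measure_stretch)
  moreover have "linear (shear k l)" for k l
    unfolding shear_def by (rule linear_shear)
  moreover have "det_scales_measure (shear m n)" "det_scales_measure (shear n m)"
    using assms unfolding shear_def by (simp_all add: det_scales_measure_shear)
  ultimately show ?thesis
    by (simp add: det_scales_measure_comp linear_compose)
qed

lemma det_scales_measure_zero_row:
  assumes "linear f" "\<And>x. f x $ i = 0"
  shows "det_scales_measure f"
proof -
  have "row i (matrix f) = 0"
    using assms(2) by (simp add: row_def matrix_def vec_eq_iff)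
  then have "det (matrix f) = 0"
    by (rule det_zero_row)
  moreover have "negligible (f ` S)" for S
    using calculation det_nz_iff_inj[OF assms(1)] negligible_linear_singular_image[OF assms(1)] by blast
  ultimately show ?thesis
    unfolding det_scales_measure_def
    by (simp add: negligible_imp_measure0 negligible_iff_null_sets fmeasurableI_null_sets)
qed

lemma
  fixes f :: "real^'n \<Rightarrow> real^'n"
  assumes "linear f" "S \<in> lmeasurable"
  shows measurable_linear_image_cart: "f ` S \<in> lmeasurable"
    and measure_linear_image_cart:
      "measure lebesgue (f ` S) = \<bar>det (matrix f)\<bar> * measure lebesgue S"
proof -
  have "det_scales_measure f"
    using assms(1) det_scales_measure_comp det_scales_measure_zero_row det_scales_measure_stretch
      det_scales_measure_swap det_scales_measure_shear
    by (rule induct_linear_elementary)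
  then show "f ` S \<in> lmeasurable" "measure lebesgue (f ` S) = \<bar>det (matrix f)\<bar> * measure lebesgue S"
    using assms(2) by (auto simp: det_scales_measure_def)
qed

lemma emeasure_lborel_linear_image:
  fixes f :: "real^'n \<Rightarrow> real^'n"
  assumes "linear f" "S \<in> sets borel" "emeasure lborel S < \<infinity>" "f ` S \<in> sets borel"
  shows "emeasure lborel (f ` S) = \<bar>det (matrix f)\<bar> * emeasure lborel S"
proof -
  have S: "S \<in> lmeasurable"
    using assms by (simp add: fmeasurable_def emeasure_completion)
  have "emeasure lborel (f ` S) = emeasure lebesgue (f ` S)"
    using assms(4) by (simp add: emeasure_completion)
  also have "\<dots> = measure lebesgue (f ` S)"
    using measurable_linear_image_cart[OF assms(1) S] by (simp add: emeasure_eq_measure2)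
  also have "\<dots> = \<bar>det (matrix f)\<bar> * measure lebesgue S"
    by (simp add: measure_linear_image_cart[OF assms(1) S])
  also have "\<dots> = \<bar>det (matrix f)\<bar> * emeasure lebesgue S"
    using S by (simp add: ennreal_mult emeasure_eq_measure2)
  also have "\<dots> = \<bar>det (matrix f)\<bar> * emeasure lborel S"
    using assms(2) by (simp add: emeasure_completion)
  finally show ?thesis .
qed

lemma lborel_affine_matrix:
  fixes V :: "real^'n^'n" and m :: "real^'n"
  assumes "invertible V"
  shows "lborel = density (distr lborel borel (\<lambda>w. m + V *v w)) (\<lambda>_. \<bar>det V\<bar>)"
proof (rule lborel_eqI)
  define T where "T w = m + V *v w" for w
  have T: "T \<in> borel_measurable borel"
    unfolding T_def by (intro borel_measurable_continuous_onI continuous_intros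
        matrix_vector_mult_linear_continuous_on)
  fix l u :: "real^'n"
  assume le: "\<And>b. b \<in> Basis \<Longrightarrow> l \<bullet> b \<le> u \<bullet> b"
  have box: "T x \<in> box l u \<longleftrightarrow> V *v x \<in> box (l - m) (u - m)" for x
    by (simp add: T_def mem_box_cart less_diff_eq diff_less_eq add.commute)
  have pre: "T -` box l u = (*v) (matrix_inv V) ` box (l - m) (u - m)"
  proof (intro equalityI subsetI)
    fix x assume "x \<in> T -` box l u"
    then show "x \<in> (*v) (matrix_inv V) ` box (l - m) (u - m)"
      using box[of x] matrix_vector_mul_matrix_inv(2)[OF assms, of x] by (metis image_eqI vimageD)
  qed (use box matrix_vector_mul_matrix_inv(1)[OF assms] in auto)
  have "emeasure lborel (T -` box l u) = \<bar>det (matrix_inv V)\<bar> * emeasure lborel (box (l - m) (u - m))"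
    using emeasure_lborel_linear_image[of "(*v) (matrix_inv V)" "box (l - m) (u - m)"]
      measurable_sets_borel[OF T, of "box l u"] emeasure_lborel_box_finite[of "l - m" "u - m"]
    by (simp add: matrix_vector_mul_linear flip: pre)
  also have "\<dots> = \<bar>det (matrix_inv V)\<bar> * (\<Prod>b\<in>Basis. (u - l) \<bullet> b)"
    using le by (simp add: emeasure_lborel_box_eq inner_diff_left ennreal_mult prod_nonneg)
  finally have "emeasure (density (distr lborel borel T) (\<lambda>_. \<bar>det V\<bar>)) (box l u)
      = ennreal (\<bar>det V\<bar> * \<bar>det (matrix_inv V)\<bar> * (\<Prod>b\<in>Basis. (u - l) \<bullet> b))"
    using T le by (simp add: emeasure_density_const emeasure_distr ennreal_mult prod_nonneg
        inner_diff_left mult.assoc)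
  moreover have "\<bar>det V\<bar> * \<bar>det (matrix_inv V)\<bar> = 1"
    using arg_cong[OF matrix_mul_matrix_inv(1)[OF assms], of det] by (simp add: det_mul abs_mult[symmetric])
  ultimately show "emeasure (density (distr lborel borel (\<lambda>w. m + V *v w)) (\<lambda>_. \<bar>det V\<bar>)) (box l u)
      = (\<Prod>b\<in>Basis. (u - l) \<bullet> b)"
    by (simp add: T_def[abs_def])
qed simp

lemma lborel_integral_affine_matrix:
  fixes V :: "real^'n^'n" and m :: "real^'n" and F :: "real^'n \<Rightarrow> real"
  assumes "invertible V" and [measurable]: "F \<in> borel_measurable borel"
  shows "(\<integral>x. F x \<partial>lborel) = \<bar>det V\<bar> * (\<integral>w. F (m + V *v w) \<partial>lborel)"
proof -
  have [measurable]: "(\<lambda>w. m + V *v w) \<in> borel_measurable borel"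
    by (intro borel_measurable_continuous_onI continuous_intros matrix_vector_mult_linear_continuous_on)
  have "(\<integral>x. F x \<partial>lborel) = (\<integral>x. \<bar>det V\<bar> *\<^sub>R F x \<partial>distr lborel borel (\<lambda>w. m + V *v w))"
    by (subst lborel_affine_matrix[OF assms(1), of m]) (rule integral_density, auto)
  also have "\<dots> = \<bar>det V\<bar> * (\<integral>w. F (m + V *v w) \<partial>lborel)"
    by (subst integral_distr) auto
  finally show ?thesis .
qed

section \<open>Gaussian integrals in coordinates\<close>

lemma measurable_vec_lambda [measurable]:
  "(\<lambda>f. vec_lambda f :: real^'n) \<in> borel_measurable (\<Pi>\<^sub>M i\<in>UNIV. lborel)"
proof (subst borel_measurable_euclidean_space, intro ballI)
  fix b :: "real^'n" assume "b \<in> Basis"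
  then obtain i where b: "b = axis i 1"
    unfolding Basis_vec_def by auto
  have "(\<lambda>f. f i) \<in> borel_measurable (\<Pi>\<^sub>M i\<in>UNIV. lborel)"
    using measurable_component_singleton[of i UNIV "\<lambda>_. lborel"] by (simp add: measurable_lborel1)
  then show "(\<lambda>f. vec_lambda f \<bullet> b) \<in> borel_measurable (\<Pi>\<^sub>M i\<in>UNIV. lborel)"
    by (simp add: b inner_axis)
qed

lemma lborel_vec_eq_PiM: "(lborel :: (real^'n) measure) = distr (\<Pi>\<^sub>M i\<in>UNIV. lborel) borel vec_lambda"
proof (rule lborel_eqI)
  interpret finite_product_sigma_finite "\<lambda>_::'n. lborel" UNIV
    by standard simp
  fix l u :: "real^'n"
  assume le: "\<And>b. b \<in> Basis \<Longrightarrow> l \<bullet> b \<le> u \<bullet> b"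
  have pre: "vec_lambda -` box l u \<inter> space (\<Pi>\<^sub>M i\<in>UNIV. lborel) = (\<Pi>\<^sub>E i\<in>UNIV. {l$i<..<u$i})"
    by (auto simp: mem_box_cart space_PiM PiE_def extensional_def Pi_def)
  have inj: "inj (\<lambda>i::'n. axis i (1::real))"
    by (auto simp: inj_def axis_eq_axis)
  have "emeasure (distr (\<Pi>\<^sub>M i\<in>UNIV. lborel) borel vec_lambda) (box l u) = (\<Prod>i\<in>UNIV. emeasure lborel {l$i<..<u$i})"
    by (simp add: emeasure_distr pre measure_times)
  also have "\<dots> = ennreal (\<Prod>i\<in>UNIV. u$i - l$i)"
  proof -
    have "l $ i \<le> u $ i" for i
      using le[of "axis i 1"] by (auto simp: Basis_vec_def inner_axis)
    then show ?thesis
      by (subst prod_ennreal[symmetric]) auto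
  qed
  also have "(\<Prod>i\<in>UNIV. u$i - l$i) = (\<Prod>b\<in>Basis. (u - l) \<bullet> b)"
  proof -
    have "(Basis :: (real^'n) set) = range (\<lambda>i. axis i 1)"
      unfolding Basis_vec_def by auto
    then show ?thesis
      using prod.reindex[OF inj, of "\<lambda>b. (u - l) \<bullet> b"] by (simp add: inner_axis)
  qed
  finally show "emeasure (distr (\<Pi>\<^sub>M i\<in>UNIV. lborel) borel vec_lambda) (box l u) = (\<Prod>b\<in>Basis. (u - l) \<bullet> b)" .
qed simp

lemma has_bochner_integral_normal_quadratic:
  assumes "0 < \<sigma>"
  shows "has_bochner_integral lborel (\<lambda>x. normal_density 0 \<sigma> x * (a * x\<^sup>2 + b * x + c)) (a * \<sigma>\<^sup>2 + c)"
proof -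
  have "has_bochner_integral lborel (\<lambda>x. normal_density 0 \<sigma> x * x\<^sup>2) (\<sigma>\<^sup>2)"
    using normal_moment_even[OF assms, of 0 1] by (simp add: power2_eq_square)
  moreover have "has_bochner_integral lborel (\<lambda>x. normal_density 0 \<sigma> x * x) 0"
    using normal_moment_nz_1[OF assms, of 0] .
  moreover have "has_bochner_integral lborel (normal_density 0 \<sigma>) 1"
    using integrable_normal_density[OF assms] integral_normal_density[OF assms]
    by (simp add: has_bochner_integral_iff)
  ultimately have "has_bochner_integral lborel
     (\<lambda>x. a * (normal_density 0 \<sigma> x * x\<^sup>2) + b * (normal_density 0 \<sigma> x * x) + c * normal_density 0 \<sigma> x)
     (a * \<sigma>\<^sup>2 + b * 0 + c * 1)"
    by (intro has_bochner_integral_add has_bochner_integral_mult_right)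
  then show ?thesis
    by (simp add: algebra_simps)
qed

lemma has_bochner_integral_normal_product_quadratic:
  fixes \<sigma> a b c :: "'n::finite \<Rightarrow> real"
  assumes \<sigma>: "\<And>i. 0 < \<sigma> i"
  shows "has_bochner_integral lborel
    (\<lambda>w::real^'n. (\<Prod>i\<in>UNIV. normal_density 0 (\<sigma> i) (w $ i)) *
        (\<Sum>i\<in>UNIV. a i * (w $ i)\<^sup>2 + b i * w $ i + c i))
    (\<Sum>i\<in>UNIV. a i * (\<sigma> i)\<^sup>2 + c i)"
proof -
  interpret finite_product_sigma_finite "\<lambda>_::'n. lborel" UNIV
    by standard simp
  define q where "q i t = a i * t\<^sup>2 + b i * t + c i" for i t
  \<comment> \<open>the \<open>j\<close>-th summand of the integrand factors over the coordinates\<close>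
  define K where "K j i t = normal_density 0 (\<sigma> i) t * (if i = j then q i t else 1)" for j i t
  have K: "has_bochner_integral lborel (K j i) (if i = j then a i * (\<sigma> i)\<^sup>2 + c i else 1)" for j i
    using has_bochner_integral_normal_quadratic[OF \<sigma>[of i]] integrable_normal_density[OF \<sigma>[of i], of 0]
      integral_normal_density[OF \<sigma>[of i], of 0]
    by (auto simp: K_def[abs_def] q_def has_bochner_integral_iff)
  have "has_bochner_integral (\<Pi>\<^sub>M i\<in>UNIV. lborel) (\<lambda>f. \<Prod>i\<in>UNIV. K j i (f i)) (a j * (\<sigma> j)\<^sup>2 + c j)" for j
  proof -
    have "integrable (\<Pi>\<^sub>M i\<in>UNIV. lborel) (\<lambda>f. \<Prod>i\<in>UNIV. K j i (f i))"
      using K by (intro product_integrable_prod) (auto simp: has_bochner_integral_iff)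
    moreover have "(\<integral>f. (\<Prod>i\<in>UNIV. K j i (f i)) \<partial>\<Pi>\<^sub>M i\<in>UNIV. lborel) = (\<Prod>i\<in>UNIV. integral\<^sup>L lborel (K j i))"
      using K by (intro product_integral_prod) (auto simp: has_bochner_integral_iff)
    moreover have "(\<Prod>i\<in>UNIV. integral\<^sup>L lborel (K j i)) = a j * (\<sigma> j)\<^sup>2 + c j"
      using K by (simp add: has_bochner_integral_iff prod.delta cong: prod.cong)
    ultimately show ?thesis
      by (simp add: has_bochner_integral_iff)
  qed
  then have "has_bochner_integral (\<Pi>\<^sub>M i\<in>UNIV. lborel) (\<lambda>f. \<Sum>j\<in>UNIV. \<Prod>i\<in>UNIV. K j i (f i))
      (\<Sum>j\<in>UNIV. a j * (\<sigma> j)\<^sup>2 + c j)"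
    by (intro has_bochner_integral_sum) auto
  moreover have "(\<Sum>j\<in>UNIV. \<Prod>i\<in>UNIV. K j i (f i)) =
      (\<Prod>i\<in>UNIV. normal_density 0 (\<sigma> i) (vec_lambda f $ i)) *
      (\<Sum>i\<in>UNIV. a i * (vec_lambda f $ i)\<^sup>2 + b i * vec_lambda f $ i + c i)" for f
    by (simp add: K_def q_def prod.distrib prod.delta sum_distrib_left)
  ultimately have "has_bochner_integral (distr (\<Pi>\<^sub>M i\<in>UNIV. lborel) borel vec_lambda)
    (\<lambda>w::real^'n. (\<Prod>i\<in>UNIV. normal_density 0 (\<sigma> i) (w $ i)) *
        (\<Sum>i\<in>UNIV. a i * (w $ i)\<^sup>2 + b i * w $ i + c i))
    (\<Sum>i\<in>UNIV. a i * (\<sigma> i)\<^sup>2 + c i)"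
    by (intro has_bochner_integral_distr) auto
  then show ?thesis
    by (simp flip: lborel_vec_eq_PiM)
qed

section \<open>The divergence between two Gaussians\<close>

lemma inner_matrix_congruence:
  fixes V A :: "real^'n^'n"
  shows "(V *v w) \<bullet> (A *v (V *v w)) = w \<bullet> ((transpose V ** A ** V) *v w)"
proof -
  have "w \<bullet> ((transpose V ** A ** V) *v w) = w \<bullet> (transpose V *v (A *v (V *v w)))"
    by (simp add: matrix_vector_mul_assoc matrix_mul_assoc)
  then show ?thesis
    by (metis dot_lmul_matrix inner_commute transpose_matrix_vector)
qed

lemma det_congruence_diag_mat:
  fixes S V :: "real^'n^'n"
  assumes "invertible S" "transpose V ** matrix_inv S ** V = diag_mat \<beta>" "\<And>i. 0 < \<beta> i"
  shows "det V \<noteq> 0" "det S = (det V)\<^sup>2 / (\<Prod>i\<in>UNIV. \<beta> i)"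
proof -
  have prod: "0 < (\<Prod>i\<in>UNIV. \<beta> i)"
    using assms(3) by (simp add: prod_pos)
  have "(det V)\<^sup>2 * det (matrix_inv S) = (\<Prod>i\<in>UNIV. \<beta> i)"
    using arg_cong[OF assms(2), of det]
    by (simp add: det_mul det_transpose det_diag_mat power2_eq_square algebra_simps)
  moreover have "det S * det (matrix_inv S) = 1"
    using arg_cong[OF matrix_mul_matrix_inv(1)[OF assms(1)], of det] by (simp add: det_mul)
  ultimately have "det S * (\<Prod>i\<in>UNIV. \<beta> i) = (det V)\<^sup>2"
    by (metis mult.assoc mult.commute mult_1)
  moreover have "(\<Prod>i\<in>UNIV. \<beta> i) \<noteq> 0"
    using prod by linarith
  ultimately show "det S = (det V)\<^sup>2 / (\<Prod>i\<in>UNIV. \<beta> i)"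
    by (metis nonzero_mult_div_cancel_right)
  show "det V \<noteq> 0"
    using \<open>(det V)\<^sup>2 * det (matrix_inv S) = (\<Prod>i\<in>UNIV. \<beta> i)\<close> prod
    by (metis less_irrefl mult_zero_left power_zero_numeral)
qed

lemma real_sqrt_prod: "sqrt (\<Prod>i\<in>I. f i) = (\<Prod>i\<in>I. sqrt (f i))"
  by (induction I rule: infinite_finite_induct) (simp_all add: real_sqrt_mult)

lemma normal_density_recip_sqrt:
  assumes "0 < \<beta>"
  shows "normal_density 0 (1 / sqrt \<beta>) t = sqrt (\<beta> / (2 * pi)) * exp (- (\<beta> * t\<^sup>2) / 2)"
  using assms by (simp add: normal_density_def power_divide real_sqrt_divide field_simps)

lemma gauss_density_whitened:
  fixes S V :: "real^'n^'n"
  assumes "invertible S" "transpose V ** matrix_inv S ** V = diag_mat \<beta>" "\<And>i. 0 < \<beta> i"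
  shows "\<bar>det V\<bar> * gauss_density m S (m + V *v w) =
    (\<Prod>i\<in>UNIV. normal_density 0 (1 / sqrt (\<beta> i)) (w $ i))"
proof -
  note det = det_congruence_diag_mat[OF assms]
  define c where "c = (2 * pi) ^ CARD('n) / (\<Prod>i\<in>UNIV. \<beta> i)"
  have c: "0 < c"
    using assms(3) by (simp add: c_def prod_pos)
  have "(2 * pi) ^ CARD('n) * det S = (det V)\<^sup>2 * c"
    by (simp add: det(2) c_def)
  then have "sqrt ((2 * pi) ^ CARD('n) * det S) = \<bar>det V\<bar> * sqrt c"
    by (simp add: real_sqrt_mult)
  then have "\<bar>det V\<bar> * gauss_density m S (m + V *v w) =
      exp (- (1/2) * (\<Sum>i\<in>UNIV. \<beta> i * (w $ i)\<^sup>2)) / sqrt c"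
    using det(1)
    by (simp add: gauss_density_def inner_matrix_congruence assms(2) inner_diag_mat)
  also have "\<dots> = (\<Prod>i\<in>UNIV. sqrt (\<beta> i / (2 * pi))) * (\<Prod>i\<in>UNIV. exp (- (\<beta> i * (w $ i)\<^sup>2) / 2))"
  proof -
    have A: "1 / sqrt c = (\<Prod>i\<in>UNIV. sqrt (\<beta> i / (2 * pi)))"
      by (simp add: c_def prod_dividef real_sqrt_divide real_sqrt_prod real_sqrt_mult
          real_sqrt_power power_mult_distrib)
    have B: "exp (- (1/2) * (\<Sum>i\<in>UNIV. \<beta> i * (w $ i)\<^sup>2)) =
        (\<Prod>i\<in>UNIV. exp (- (\<beta> i * (w $ i)\<^sup>2) / 2))"
      by (simp add: exp_sum[symmetric] sum_divide_distrib sum_negf)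
    have "exp (- (1/2) * (\<Sum>i\<in>UNIV. \<beta> i * (w $ i)\<^sup>2)) / sqrt c =
        1 / sqrt c * exp (- (1/2) * (\<Sum>i\<in>UNIV. \<beta> i * (w $ i)\<^sup>2))"
      by simp
    then show ?thesis
      by (simp only: A B)
  qed
  also have "\<dots> = (\<Prod>i\<in>UNIV. sqrt (\<beta> i / (2 * pi)) * exp (- (\<beta> i * (w $ i)\<^sup>2) / 2))"
    by (rule prod.distrib[symmetric])
  also have "\<dots> = (\<Prod>i\<in>UNIV. normal_density 0 (1 / sqrt (\<beta> i)) (w $ i))"
    using assms(3) by (simp add: normal_density_recip_sqrt)
  finally show ?thesis .
qed

lemma borel_measurable_gauss_density [measurable]: "gauss_density m S \<in> borel_measurable borel"
proof -
  have [measurable]: "(\<lambda>x. matrix_inv S *v (x - m)) \<in> borel_measurable borel"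
    by (intro borel_measurable_continuous_onI continuous_intros
        matrix_vector_mult_linear_continuous_on[THEN continuous_on_compose2]) auto
  show ?thesis
    unfolding gauss_density_def by measurable
qed

lemma ln_normal_density_ratio:
  assumes "0 < \<alpha>" "0 < \<beta>"
  shows "ln (normal_density 0 (1 / sqrt \<alpha>) t / normal_density 0 (1 / sqrt \<beta>) (t - e)) =
    (\<beta> - \<alpha>) / 2 * t\<^sup>2 + - (\<beta> * e) * t + (\<beta> * e\<^sup>2 + ln \<alpha> - ln \<beta>) / 2"
  using assms
  by (simp add: normal_density_recip_sqrt ln_div ln_mult ln_sqrt power2_diff field_simps)

lemma ln_gauss_density_ratio_whitened:
  fixes m e w :: "real^'n" and S S' V :: "real^'n^'n"
  assumes S: "invertible S" "transpose V ** matrix_inv S ** V = diag_mat \<alpha>" "\<And>i. 0 < \<alpha> i"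
    and S': "invertible S'" "transpose V ** matrix_inv S' ** V = diag_mat \<beta>" "\<And>i. 0 < \<beta> i"
  shows "ln (gauss_density m S (m + V *v w) / gauss_density (m + V *v e) S' (m + V *v w)) =
    (\<Sum>i\<in>UNIV. (\<beta> i - \<alpha> i) / 2 * (w $ i)\<^sup>2 + - (\<beta> i * e $ i) * w $ i +
      (\<beta> i * (e $ i)\<^sup>2 + ln (\<alpha> i) - ln (\<beta> i)) / 2)"
proof -
  define N where "N i = normal_density 0 (1 / sqrt (\<alpha> i))" for i
  define N' where "N' i = normal_density 0 (1 / sqrt (\<beta> i))" for i
  have x: "m + V *v w = (m + V *v e) + V *v (w - e)"
    by (simp add: matrix_vector_mult_diff_distrib)
  have dens: "\<bar>det V\<bar> * gauss_density m S (m + V *v w) = (\<Prod>i\<in>UNIV. N i (w $ i))"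
    "\<bar>det V\<bar> * gauss_density (m + V *v e) S' (m + V *v w) = (\<Prod>i\<in>UNIV. N' i (w $ i - e $ i))"
    using gauss_density_whitened[OF S, of m w] gauss_density_whitened[OF S', of "m + V *v e" "w - e"]
    by (simp_all add: N_def N'_def flip: x)
  have "gauss_density m S (m + V *v w) / gauss_density (m + V *v e) S' (m + V *v w) =
      (\<Prod>i\<in>UNIV. N i (w $ i) / N' i (w $ i - e $ i))"
    using det_congruence_diag_mat(1)[OF S] by (simp add: prod_dividef flip: dens)
  moreover have "0 < N i t" "0 < N' i t" for i t
    using S(3) S'(3) by (simp_all add: N_def N'_def normal_density_pos)
  ultimately show ?thesis
    using S(3) S'(3)
    by (simp add: ln_prod less_imp_neq[symmetric] N_def N'_def ln_normal_density_ratio)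
qed

lemma KL_gauss_whitened:
  fixes m e :: "real^'n" and S S' V :: "real^'n^'n"
  assumes S: "invertible S" "transpose V ** matrix_inv S ** V = diag_mat \<alpha>" "\<And>i. 0 < \<alpha> i"
    and S': "invertible S'" "transpose V ** matrix_inv S' ** V = diag_mat \<beta>" "\<And>i. 0 < \<beta> i"
  shows "KL (gauss_density m S) (gauss_density (m + V *v e) S') =
    (1/2) * (\<Sum>i\<in>UNIV. \<beta> i / \<alpha> i - 1 + \<beta> i * (e $ i)\<^sup>2 + ln (\<alpha> i) - ln (\<beta> i))"
proof -
  define p where "p = gauss_density m S"
  define p' where "p' = gauss_density (m + V *v e) S'"
  define a where "a i = (\<beta> i - \<alpha> i) / 2" for i
  define b where "b i = - (\<beta> i * e $ i)" for i
  define c where "c i = (\<beta> i * (e $ i)\<^sup>2 + ln (\<alpha> i) - ln (\<beta> i)) / 2" for i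
  have integrand: "\<bar>det V\<bar> * (p (m + V *v w) * ln (p (m + V *v w) / p' (m + V *v w))) =
      (\<Prod>i\<in>UNIV. normal_density 0 (1 / sqrt (\<alpha> i)) (w $ i)) *
      (\<Sum>i\<in>UNIV. a i * (w $ i)\<^sup>2 + b i * w $ i + c i)" for w
    using gauss_density_whitened[OF S, of m w] ln_gauss_density_ratio_whitened[OF S S', of m w e]
    by (simp add: p_def p'_def a_def b_def c_def flip: mult.assoc)
  have "KL p p' = \<bar>det V\<bar> * (\<integral>w. p (m + V *v w) * ln (p (m + V *v w) / p' (m + V *v w)) \<partial>lborel)"
    unfolding KL_def using det_congruence_diag_mat(1)[OF S]
    by (intro lborel_integral_affine_matrix) (auto simp: invertible_det_nz p_def p'_def)
  also have "\<dots> = (\<integral>w. (\<Prod>i\<in>UNIV. normal_density 0 (1 / sqrt (\<alpha> i)) (w $ i)) *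
      (\<Sum>i\<in>UNIV. a i * (w $ i)\<^sup>2 + b i * w $ i + c i) \<partial>lborel)"
    by (simp flip: integrand)
  also have "\<dots> = (\<Sum>i\<in>UNIV. a i * (1 / sqrt (\<alpha> i))\<^sup>2 + c i)"
    using has_bochner_integral_normal_product_quadratic[of "\<lambda>i. 1 / sqrt (\<alpha> i)" a b c] S(3)
    by (simp add: has_bochner_integral_iff)
  also have "\<dots> = (1/2) * (\<Sum>i\<in>UNIV. \<beta> i / \<alpha> i - 1 + \<beta> i * (e $ i)\<^sup>2 + ln (\<alpha> i) - ln (\<beta> i))"
  proof -
    have "a i * (1 / sqrt (\<alpha> i))\<^sup>2 + c i =
        (1/2) * (\<beta> i / \<alpha> i - 1 + \<beta> i * (e $ i)\<^sup>2 + ln (\<alpha> i) - ln (\<beta> i))" for i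
      using S(3)[of i] by (simp add: a_def c_def power_divide field_simps)
    then show ?thesis
      by (simp only: sum_distrib_left)
  qed
  finally show ?thesis
    by (simp add: p_def p'_def)
qed

lemma KL_gauss_pair:
  fixes mu1 mu2 :: "real^'n" and S1 S2 :: "real^'n^'n"
  assumes "pos_def_matrix S1" "pos_def_matrix S2"
  obtains l :: "'n \<Rightarrow> real" and e :: "'n \<Rightarrow> real"
  where "\<And>i. 0 < l i"
    and "KL (gauss_density mu1 S1) (gauss_density mu2 S2) = (1/2) * (\<Sum>i\<in>UNIV. psi (l i) + (e i)\<^sup>2)"
    and "KL (gauss_density mu2 S2) (gauss_density mu1 S1) =
      (1/2) * (\<Sum>i\<in>UNIV. psi (1 / l i) + (e i)\<^sup>2 / l i)"
proof -
  have inv: "invertible S1" "invertible S2"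
    using assms by (simp_all add: pos_def_matrix_invertible)
  obtain V :: "real^'n^'n" and \<mu> where V2: "transpose V ** matrix_inv S2 ** V = diag_mat (\<lambda>_. 1)"
    and V1: "transpose V ** matrix_inv S1 ** V = diag_mat \<mu>" and \<mu>: "\<And>i. 0 < \<mu> i"
    using simultaneous_diagonalization[OF pos_def_matrix_inv pos_def_matrix_inv, OF assms(2,1)]
    by (metis mat_1_eq_diag_mat)
  have "invertible V"
    using det_congruence_diag_mat(1)[OF inv(2) V2] by (simp add: invertible_det_nz)
  define e where "e = matrix_inv V *v (mu2 - mu1)"
  have e: "mu2 = mu1 + V *v e"
    using matrix_vector_mul_matrix_inv(1)[OF \<open>invertible V\<close>, of "mu2 - mu1"] by (simp add: e_def)
  have "mu1 = mu2 + V *v (- e)"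
    by (simp add: e linear_neg[OF matrix_vector_mul_linear])
  have "KL (gauss_density mu1 S1) (gauss_density mu2 S2) =
      (1/2) * (\<Sum>i\<in>UNIV. 1 / \<mu> i - 1 + 1 * (e $ i)\<^sup>2 + ln (\<mu> i) - ln 1)"
    unfolding e by (rule KL_gauss_whitened[OF inv(1) V1 \<mu> inv(2) V2]) simp
  also have "\<dots> = (1/2) * (\<Sum>i\<in>UNIV. psi (1 / \<mu> i) + (e $ i)\<^sup>2)"
    using \<mu> by (intro arg_cong[where f = "(*) (1/2)"] sum.cong) (simp_all add: psi_recip)
  finally have forward: "KL (gauss_density mu1 S1) (gauss_density mu2 S2) =
      (1/2) * (\<Sum>i\<in>UNIV. psi (1 / \<mu> i) + (e $ i)\<^sup>2)" .
  have "KL (gauss_density mu2 S2) (gauss_density mu1 S1) =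
      (1/2) * (\<Sum>i\<in>UNIV. \<mu> i / 1 - 1 + \<mu> i * ((- e) $ i)\<^sup>2 + ln 1 - ln (\<mu> i))"
    unfolding \<open>mu1 = mu2 + V *v (- e)\<close> by (rule KL_gauss_whitened[OF inv(2) V2 _ inv(1) V1 \<mu>]) simp
  also have "\<dots> = (1/2) * (\<Sum>i\<in>UNIV. psi (1 / (1 / \<mu> i)) + (e $ i)\<^sup>2 / (1 / \<mu> i))"
    by (intro arg_cong[where f = "(*) (1/2)"] sum.cong) (simp_all add: psi_def)
  finally have backward: "KL (gauss_density mu2 S2) (gauss_density mu1 S1) =
      (1/2) * (\<Sum>i\<in>UNIV. psi (1 / (1 / \<mu> i)) + (e $ i)\<^sup>2 / (1 / \<mu> i))" .
  show ?thesis
    by (rule that[OF _ forward backward]) (simp add: \<mu>)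
qed

theorem theorem3:
  fixes M :: real and mu1 mu2 :: "real^'n" and S1 S2 :: "real^'n^'n"
  assumes "M > 0"
    and "pos_def_matrix S1" and "pos_def_matrix S2"
    and "KL (gauss_density mu1 S1) (gauss_density mu2 S2) \<ge> M"
  shows "KL (gauss_density mu2 S2) (gauss_density mu1 S1) \<ge>
    (1/2) * (1 / (- lambert_W_m1 (- exp (- (1 + 2*M))))
             - ln (1 / (- lambert_W_m1 (- exp (- (1 + 2*M))))) - 1)"
proof (rule KL_gauss_pair[of S1 S2 mu1 mu2, OF assms(2,3)])
  fix l e :: "'n \<Rightarrow> real"
  assume l: "\<And>i. 0 < l i"
    and forward: "KL (gauss_density mu1 S1) (gauss_density mu2 S2) = (1/2) * (\<Sum>i\<in>UNIV. psi (l i) + (e i)\<^sup>2)"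
    and backward: "KL (gauss_density mu2 S2) (gauss_density mu1 S1) =
      (1/2) * (\<Sum>i\<in>UNIV. psi (1 / l i) + (e i)\<^sup>2 / l i)"
  have "psi_recip_bound (2 * M) \<le> (\<Sum>i\<in>UNIV. psi (1 / l i) + (e i)\<^sup>2 / l i)"
    using assms(1,4) l forward by (intro psi_recip_bound_le_sum) auto
  moreover have "lambert_W_m1 (- exp (- (1 + 2*M))) = - psi_upper_inv (2 * M)"
    using assms(1) by (intro lambert_W_m1_eq_psi_upper_inv) simp
  ultimately show ?thesis
    by (simp add: backward psi_recip_bound_def psi_def)
qed

end
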